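(* Let $\tau$ be an infinite cardinal, let $(G,X,\alpha)$ be a $G$-space, and suppose $G$ is a (topological) subgroup of a product $\Pi=\prod\{G_s:s\in S\}$ of topological groups. Suppose that either (a) the action $\alpha$ is transitive and $\chi(X)\le\tau$, or (b) $(G,X,\alpha)$ is $G$-Tychonoff, $\mathcal U$ is an equiuniformity on $X$ and $w(\mathcal U)\le\tau$. Then there exist $S'\subset S$ with $|S'|\le\tau$ and an action $\gamma:\mathrm{pr}_{S'}(G)\times X\to X$, where $\mathrm{pr}_{S'}:\Pi\to\prod\{G_s:s\in S'\}$ is the projection and $\mathrm{pr}_{S'}(G)$ carries the subspace topology, such that $(\mathrm{pr}_{S'}(G),X,\gamma)$ is a $G$-space with transitive action $\gamma$ in case (a), respectively $(\mathrm{pr}_{S'}(G),X,\gamma)$ is a $G$-space for which $\mathcal U$ is an equiuniformity in case (b); and $(\mathrm{pr}_{S'}|_G,\mathrm{id}):(G,X,\alpha)\to(\mathrm{pr}_{S'}(G),X,\gamma)$ is an equivariant pair of maps.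
   Context: All spaces are Tychonoff and all maps continuous. A $G$-space $(G,X,\alpha)$ is a topological group $G$ with a continuous action $\alpha:G\times X\to X$; it is transitive if $Gx=X$ for $x\in X$. An equivariant pair of maps $(\varphi,\mathrm{id}):(G,X,\alpha)\to(H,X,\gamma)$ is a continuous homomorphism $\varphi:G\to H$ with $\alpha(g,x)=\gamma(\varphi(g),x)$ for all $g,x$. Uniformities are given by families of open covers; $w(\mathcal U)$ is the minimal cardinality of a base of $\mathcal U$. $\mathcal U$ is an equiuniformity for $(G,X,\alpha)$ if it is saturated ($gu\in\mathcal U$ for all $u\in\mathcal U$, $g\in G$) and bounded (for every $u\in\mathcal U$ there are an open neighborhood $O$ of the unit of $G$ and $v\in\mathcal U$ with $\{OV:V\in v\}$ refining $u$). $(G,X,\alpha)$ is $G$-Tychonoff if there is a compactification $bX$ of $X$ with a continuous $G$-action extending $\alpha$. $\chi(X)$ is the character of $X$. *)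

theory Defs
  imports "HOL-Analysis.Analysis" "HOL-Algebra.Product_Groups"
begin

definition topological_group :: "('g, 'c) monoid_scheme \<Rightarrow> 'g topology \<Rightarrow> bool" where
  "topological_group G T \<longleftrightarrow>
     group G \<and> topspace T = carrier G \<and>
     continuous_map (prod_topology T T) T (\<lambda>p. fst p \<otimes>\<^bsub>G\<^esub> snd p) \<and>
     continuous_map T T (\<lambda>g. inv\<^bsub>G\<^esub> g)"

definition tychonoff_space :: "'x topology \<Rightarrow> bool" where
  "tychonoff_space X \<longleftrightarrow> completely_regular_space X \<and> t1_space X"

definition g_space ::
  "('g, 'c) monoid_scheme \<Rightarrow> 'g topology \<Rightarrow> 'x topology \<Rightarrow> ('g \<Rightarrow> 'x \<Rightarrow> 'x) \<Rightarrow> bool" where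
  "g_space G T X \<alpha> \<longleftrightarrow>
     topological_group G T \<and> tychonoff_space X \<and>
     continuous_map (prod_topology T X) X (\<lambda>p. \<alpha> (fst p) (snd p)) \<and>
     (\<forall>x\<in>topspace X. \<alpha> \<one>\<^bsub>G\<^esub> x = x) \<and>
     (\<forall>g\<in>carrier G. \<forall>h\<in>carrier G. \<forall>x\<in>topspace X. \<alpha> g (\<alpha> h x) = \<alpha> (g \<otimes>\<^bsub>G\<^esub> h) x)"

definition transitive_action ::
  "('g, 'c) monoid_scheme \<Rightarrow> 'x topology \<Rightarrow> ('g \<Rightarrow> 'x \<Rightarrow> 'x) \<Rightarrow> bool" where
  "transitive_action G X \<alpha> \<longleftrightarrow> (\<forall>x\<in>topspace X. (\<lambda>g. \<alpha> g x) ` carrier G = topspace X)"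

text \<open>Equivariant pair of maps (phi, id): continuous homomorphism phi with
  alpha(g,x) = gamma(phi g, x).\<close>
definition equivariant_pair ::
  "('g, 'c) monoid_scheme \<Rightarrow> 'g topology \<Rightarrow> ('h, 'd) monoid_scheme \<Rightarrow> 'h topology \<Rightarrow>
   'x topology \<Rightarrow> ('g \<Rightarrow> 'x \<Rightarrow> 'x) \<Rightarrow> ('h \<Rightarrow> 'x \<Rightarrow> 'x) \<Rightarrow> ('g \<Rightarrow> 'h) \<Rightarrow> bool" where
  "equivariant_pair G TG H TH X \<alpha> \<gamma> \<phi> \<longleftrightarrow>
     \<phi> \<in> hom G H \<and> continuous_map TG TH \<phi> \<and>
     (\<forall>g\<in>carrier G. \<forall>x\<in>topspace X. \<alpha> g x = \<gamma> (\<phi> g) x)"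

definition character_le :: "'x topology \<Rightarrow> 'k set \<Rightarrow> bool" where
  "character_le X K \<longleftrightarrow>
     (\<forall>x\<in>topspace X. \<exists>B. B \<lesssim> K \<and> (\<forall>U\<in>B. openin X U \<and> x \<in> U) \<and>
        (\<forall>W. openin X W \<and> x \<in> W \<longrightarrow> (\<exists>U\<in>B. U \<subseteq> W)))"

definition open_cover :: "'x topology \<Rightarrow> 'x set set \<Rightarrow> bool" where
  "open_cover X u \<longleftrightarrow> (\<forall>U\<in>u. openin X U) \<and> \<Union>u = topspace X"

definition refines :: "'x set set \<Rightarrow> 'x set set \<Rightarrow> bool" where
  "refines v u \<longleftrightarrow> (\<forall>V\<in>v. \<exists>U\<in>u. V \<subseteq> U)"

definition star_of :: "'x set \<Rightarrow> 'x set set \<Rightarrow> 'x set" where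
  "star_of A u = \<Union>{U\<in>u. U \<inter> A \<noteq> {}}"

definition star_refines :: "'x set set \<Rightarrow> 'x set set \<Rightarrow> bool" where
  "star_refines v u \<longleftrightarrow> (\<forall>V\<in>v. \<exists>U\<in>u. star_of V v \<subseteq> U)"

definition uniformity_on :: "'x topology \<Rightarrow> 'x set set set \<Rightarrow> bool" where
  "uniformity_on X \<U> \<longleftrightarrow>
     \<U> \<noteq> {} \<and>
     (\<forall>u\<in>\<U>. open_cover X u) \<and>
     (\<forall>u\<in>\<U>. \<forall>v. open_cover X v \<and> refines u v \<longrightarrow> v \<in> \<U>) \<and>
     (\<forall>u\<in>\<U>. \<forall>v\<in>\<U>. \<exists>w\<in>\<U>. refines w u \<and> refines w v) \<and>
     (\<forall>u\<in>\<U>. \<exists>v\<in>\<U>. star_refines v u) \<and>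
     (\<forall>W x. openin X W \<and> x \<in> W \<longrightarrow> (\<exists>u\<in>\<U>. star_of {x} u \<subseteq> W))"

definition uniformity_weight_le :: "'x set set set \<Rightarrow> 'k set \<Rightarrow> bool" where
  "uniformity_weight_le \<U> K \<longleftrightarrow>
     (\<exists>B\<subseteq>\<U>. B \<lesssim> K \<and> (\<forall>u\<in>\<U>. \<exists>v\<in>B. refines v u))"

definition equiuniformity ::
  "('g, 'c) monoid_scheme \<Rightarrow> 'g topology \<Rightarrow> 'x topology \<Rightarrow> ('g \<Rightarrow> 'x \<Rightarrow> 'x) \<Rightarrow>
   'x set set set \<Rightarrow> bool" where
  "equiuniformity G T X \<alpha> \<U> \<longleftrightarrow>
     uniformity_on X \<U> \<and>
     (\<forall>u\<in>\<U>. \<forall>g\<in>carrier G. (\<lambda>U. \<alpha> g ` U) ` u \<in> \<U>) \<and>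
     (\<forall>u\<in>\<U>. \<exists>N v. openin T N \<and> \<one>\<^bsub>G\<^esub> \<in> N \<and> v \<in> \<U> \<and>
        refines ((\<lambda>V. {\<alpha> g y | g y. g \<in> N \<and> y \<in> V}) ` v) u)"

definition G_tychonoff ::
  "'b itself \<Rightarrow> ('g, 'c) monoid_scheme \<Rightarrow> 'g topology \<Rightarrow> 'x topology \<Rightarrow> ('g \<Rightarrow> 'x \<Rightarrow> 'x) \<Rightarrow> bool"
  where
  "G_tychonoff (_ :: 'b itself) G T X \<alpha> \<longleftrightarrow>
     (\<exists>(K :: 'b topology) (e :: 'x \<Rightarrow> 'b) \<beta>.
        compact_space K \<and> Hausdorff_space K \<and> embedding_map X K e \<and>
        K closure_of (e ` topspace X) = topspace K \<and>
        g_space G T K \<beta> \<and>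
        (\<forall>g\<in>carrier G. \<forall>x\<in>topspace X. \<beta> g (e x) = e (\<alpha> g x)))"

end

theory Submission
  imports Defs
begin

(* A neighbourhood of the unit in a subgroup G of a product is determined by finitely many
  coordinates. In case (a) a local base of size at most tau at one point, in case (b) a base of
  size at most tau of the equiuniformity, gives at most tau neighbourhoods of the unit that control
  the action; the union S' of their finite supports has size at most tau, and the action is then
  continuous at (1, x) for the topology that pr_S' induces on G. Since X is T1, the kernel of
  pr_S' acts trivially, so the action factors through pr_S'(G); translating the estimate at the
  unit gives joint continuity, and in case (a) transitivity carries the estimate from one point
  to all others by conjugation. *)

section \<open>Open sets in products depend on few coordinates\<close>

lemma lepoll_UN_finite:
  assumes "infinite K" "I \<lesssim> K" "\<And>i. i \<in> I \<Longrightarrow> finite (A i)"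
  shows "(\<Union>i\<in>I. A i) \<lesssim> K"
proof -
  include cardinal_syntax
  have "|I| \<le>o |K|" using assms(2) by (simp add: lepoll_def card_of_ordLeq[symmetric])
  moreover have "\<forall>i\<in>I. |A i| \<le>o |K|"
    using assms by (metis card_of_ordLeq finite_lepoll_infinite lepoll_def)
  ultimately have "|\<Union>i\<in>I. A i| \<le>o |K|"
    using assms(1) card_of_UNION_ordLeq_infinite by blast
  then show ?thesis by (simp add: lepoll_def card_of_ordLeq[symmetric])
qed

lemma openin_subtopology_product_finite_coordinates:
  assumes N: "openin (subtopology (product_topology T I) A) N" and z: "z \<in> N"
    and A: "A \<subseteq> topspace (product_topology T I)"
  obtains F where "finite F" "F \<subseteq> I"
    "\<And>J. F \<subseteq> J \<Longrightarrow> J \<subseteq> I \<Longrightarrow>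
       \<exists>Q. openin (subtopology (product_topology T J) ((\<lambda>f. restrict f J) ` A)) Q \<and>
           restrict z J \<in> Q \<and> (\<forall>f\<in>A. restrict f J \<in> Q \<longrightarrow> f \<in> N)"
proof -
  obtain N0 where N0: "openin (product_topology T I) N0" "N = N0 \<inter> A"
    using N unfolding openin_subtopology by blast
  have "z \<in> N0" using z N0(2) by blast
  from product_topology_open_contains_basis[OF N0(1) this]
  obtain Y where Y: "z \<in> (\<Pi>\<^sub>E i\<in>I. Y i)" "\<forall>i. openin (T i) (Y i)"
      "finite {i. Y i \<noteq> topspace (T i)}" "(\<Pi>\<^sub>E i\<in>I. Y i) \<subseteq> N0"
    by (elim exE conjE) (rule that)
  define F where "F = {i\<in>I. Y i \<noteq> topspace (T i)}"
  have "finite F" using Y(3) unfolding F_def by (rule rev_finite_subset) auto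
  moreover have "F \<subseteq> I" unfolding F_def by auto
  moreover have "\<exists>Q. openin (subtopology (product_topology T J) ((\<lambda>f. restrict f J) ` A)) Q \<and>
      restrict z J \<in> Q \<and> (\<forall>f\<in>A. restrict f J \<in> Q \<longrightarrow> f \<in> N)"
    if J: "F \<subseteq> J" "J \<subseteq> I" for J
  proof (intro exI conjI)
    let ?Q = "(\<Pi>\<^sub>E i\<in>J. Y i) \<inter> (\<lambda>f. restrict f J) ` A"
    have "openin (product_topology T J) (\<Pi>\<^sub>E i\<in>J. Y i)"
      using Y(2,3) by (intro product_topology_basis) auto
    then show "openin (subtopology (product_topology T J) ((\<lambda>f. restrict f J) ` A)) ?Q"
      unfolding openin_subtopology by blast
    show "restrict z J \<in> ?Q"
      using Y(1) J(2) z N0(2) by (auto simp: PiE_iff)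
    show "\<forall>f\<in>A. restrict f J \<in> ?Q \<longrightarrow> f \<in> N"
    proof (intro ballI impI)
      fix f assume f: "f \<in> A" "restrict f J \<in> ?Q"
      have "f i \<in> Y i" if i: "i \<in> I" for i
      proof (cases "i \<in> J")
        case True
        then show ?thesis using f(2) by (auto simp: PiE_iff)
      next
        case False
        then have "Y i = topspace (T i)" using i J(1) unfolding F_def by blast
        then show ?thesis using f(1) A i by (auto simp: PiE_iff)
      qed
      then have "f \<in> (\<Pi>\<^sub>E i\<in>I. Y i)" using f(1) A by (auto simp: PiE_iff)
      then show "f \<in> N" using Y(4) N0(2) f(1) by blast
    qed
  qed
  ultimately show ?thesis using that by blast
qed

lemma small_coordinate_set_for_neighbourhoods:
  assumes K: "infinite K" and B: "B \<lesssim> K"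
    and N: "\<And>b. b \<in> B \<Longrightarrow> openin (subtopology (product_topology T I) A) (N b)"
    and z: "\<And>b. b \<in> B \<Longrightarrow> z \<in> N b"
    and A: "A \<subseteq> topspace (product_topology T I)"
  obtains J where "J \<subseteq> I" "J \<lesssim> K"
    "\<And>b. b \<in> B \<Longrightarrow>
       \<exists>Q. openin (subtopology (product_topology T J) ((\<lambda>f. restrict f J) ` A)) Q \<and>
           restrict z J \<in> Q \<and> (\<forall>f\<in>A. restrict f J \<in> Q \<longrightarrow> f \<in> N b)"
proof -
  define P where "P b F \<longleftrightarrow> finite F \<and> F \<subseteq> I \<and> (\<forall>J. F \<subseteq> J \<and> J \<subseteq> I \<longrightarrow>
       (\<exists>Q. openin (subtopology (product_topology T J) ((\<lambda>f. restrict f J) ` A)) Q \<and>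
            restrict z J \<in> Q \<and> (\<forall>f\<in>A. restrict f J \<in> Q \<longrightarrow> f \<in> N b)))" for b F
  have "\<exists>F. P b F" if "b \<in> B" for b
    by (rule openin_subtopology_product_finite_coordinates[OF N[OF that] z[OF that] A])
      (auto simp: P_def)
  then obtain F where F: "\<And>b. b \<in> B \<Longrightarrow> P b (F b)" by metis
  define J where "J = (\<Union>b\<in>B. F b)"
  show ?thesis
  proof
    show "J \<subseteq> I" using F by (auto simp: J_def P_def)
    show "J \<lesssim> K" unfolding J_def using lepoll_UN_finite[OF K B] F by (auto simp: P_def)
  next
    fix b assume b: "b \<in> B"
    then have "F b \<subseteq> J" "J \<subseteq> I" using F by (auto simp: J_def P_def)
    then show "\<exists>Q. openin (subtopology (product_topology T J) ((\<lambda>f. restrict f J) ` A)) Q \<and>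
        restrict z J \<in> Q \<and> (\<forall>f\<in>A. restrict f J \<in> Q \<longrightarrow> f \<in> N b)"
      using F[OF b] unfolding P_def by blast
  qed
qed

lemma topological_group_group: "topological_group G T \<Longrightarrow> group G"
  by (simp add: topological_group_def)

lemma topological_group_topspace: "topological_group G T \<Longrightarrow> topspace T = carrier G"
  by (simp add: topological_group_def)

lemma continuous_map_left_translation:
  assumes "topological_group G T" "a \<in> carrier G"
  shows "continuous_map T T (\<lambda>q. a \<otimes>\<^bsub>G\<^esub> q)"
proof -
  have pair: "continuous_map T (prod_topology T T) (\<lambda>q. (a, q))"
    using assms by (auto simp: topological_group_def intro!: continuous_map_pairedI)
  have mult: "continuous_map (prod_topology T T) T (\<lambda>p. fst p \<otimes>\<^bsub>G\<^esub> snd p)"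
    using assms(1) by (simp add: topological_group_def)
  from continuous_map_compose[OF pair mult] show ?thesis by (simp add: o_def)
qed

lemma continuous_map_right_translation:
  assumes "topological_group G T" "a \<in> carrier G"
  shows "continuous_map T T (\<lambda>q. q \<otimes>\<^bsub>G\<^esub> a)"
proof -
  have pair: "continuous_map T (prod_topology T T) (\<lambda>q. (q, a))"
    using assms by (auto simp: topological_group_def intro!: continuous_map_pairedI)
  have mult: "continuous_map (prod_topology T T) T (\<lambda>p. fst p \<otimes>\<^bsub>G\<^esub> snd p)"
    using assms(1) by (simp add: topological_group_def)
  from continuous_map_compose[OF pair mult] show ?thesis by (simp add: o_def)
qed

lemma continuous_map_conjugation:
  assumes "topological_group G T" "a \<in> carrier G"
  shows "continuous_map T T (\<lambda>q. inv\<^bsub>G\<^esub> a \<otimes>\<^bsub>G\<^esub> q \<otimes>\<^bsub>G\<^esub> a)"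
proof -
  have "inv\<^bsub>G\<^esub> a \<in> carrier G"
    using assms by (simp add: group.inv_closed topological_group_group)
  from continuous_map_compose[OF continuous_map_left_translation[OF assms(1) this]
      continuous_map_right_translation[OF assms]]
  show ?thesis by (simp add: o_def)
qed

lemma hom_restrict_carrier:
  assumes "h \<in> hom G G'" "H \<subseteq> carrier G"
  shows "h \<in> hom (G\<lparr>carrier := H\<rparr>) (G'\<lparr>carrier := h ` H\<rparr>)"
  using assms by (intro homI) (auto simp: hom_mult[OF assms(1)] subsetD[OF assms(2)])

lemma topological_group_product:
  assumes tg: "\<And>i. i \<in> I \<Longrightarrow> topological_group (Gs i) (Ts i)"
  shows "topological_group (product_group I Gs) (product_topology Ts I)"
proof -
  let ?T = "product_topology Ts I"
  have grp: "\<And>i. i \<in> I \<Longrightarrow> group (Gs i)"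
    and mult: "\<And>i. i \<in> I \<Longrightarrow>
      continuous_map (prod_topology (Ts i) (Ts i)) (Ts i) (\<lambda>p. fst p \<otimes>\<^bsub>Gs i\<^esub> snd p)"
    and inv: "\<And>i. i \<in> I \<Longrightarrow> continuous_map (Ts i) (Ts i) (\<lambda>g. inv\<^bsub>Gs i\<^esub> g)"
    using tg by (auto simp: topological_group_def)
  have tsp: "topspace ?T = carrier (product_group I Gs)"
    using tg by (auto simp: topological_group_def PiE_iff)
  have "continuous_map (prod_topology ?T ?T) ?T (\<lambda>p. \<lambda>i\<in>I. fst p i \<otimes>\<^bsub>Gs i\<^esub> snd p i)"
    unfolding continuous_map_componentwise
  proof (intro conjI ballI)
    fix k assume k: "k \<in> I"
    have "continuous_map (prod_topology ?T ?T) (prod_topology (Ts k) (Ts k)) (\<lambda>p. (fst p k, snd p k))"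
      unfolding continuous_map_paired using k
      by (auto intro!: continuous_map_compose[OF continuous_map_fst, where g = "\<lambda>x. x k", simplified o_def]
          continuous_map_compose[OF continuous_map_snd, where g = "\<lambda>x. x k", simplified o_def]
          continuous_map_product_projection)
    from continuous_map_compose[OF this mult[OF k]]
    show "continuous_map (prod_topology ?T ?T) (Ts k) (\<lambda>p. (\<lambda>i\<in>I. fst p i \<otimes>\<^bsub>Gs i\<^esub> snd p i) k)"
      using k by (simp add: o_def)
  qed auto
  moreover have "continuous_map ?T ?T (\<lambda>g. \<lambda>i\<in>I. inv\<^bsub>Gs i\<^esub> g i)"
    unfolding continuous_map_componentwise
  proof (intro conjI ballI)
    fix k assume k: "k \<in> I"
    from continuous_map_compose[OF continuous_map_product_projection[where X=Ts, OF k] inv[OF k]]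
    show "continuous_map ?T (Ts k) (\<lambda>g. (\<lambda>i\<in>I. inv\<^bsub>Gs i\<^esub> g i) k)"
      using k by (simp add: o_def)
  qed auto
  then have "continuous_map ?T ?T (\<lambda>g. inv\<^bsub>product_group I Gs\<^esub> g)"
    by (rule continuous_map_eq) (use tsp grp in simp)
  ultimately show ?thesis
    using grp tsp by (simp add: topological_group_def)
qed

lemma topological_group_subgroup:
  assumes tg: "topological_group G T" and H: "subgroup H G"
  shows "topological_group (G\<lparr>carrier := H\<rparr>) (subtopology T H)"
proof -
  interpret G: group G using tg by (rule topological_group_group)
  let ?T = "subtopology T H"
  have tsp: "topspace ?T = H"
    using tg H subgroup.subset by (fastforce simp: topological_group_def)
  have "continuous_map (prod_topology T T) T (\<lambda>p. fst p \<otimes>\<^bsub>G\<^esub> snd p)"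
    using tg by (simp add: topological_group_def)
  then have "continuous_map (subtopology (prod_topology T T) (H \<times> H)) T (\<lambda>p. fst p \<otimes>\<^bsub>G\<^esub> snd p)"
    by (rule continuous_map_from_subtopology)
  then have "continuous_map (prod_topology ?T ?T) T (\<lambda>p. fst p \<otimes>\<^bsub>G\<^esub> snd p)"
    by (simp add: subtopology_Times)
  then have mult: "continuous_map (prod_topology ?T ?T) ?T (\<lambda>p. fst p \<otimes>\<^bsub>G\<^esub> snd p)"
    unfolding continuous_map_in_subtopology using tsp subgroup.m_closed[OF H] by auto
  have "continuous_map ?T T (\<lambda>g. inv\<^bsub>G\<^esub> g)"
    using tg by (simp add: topological_group_def continuous_map_from_subtopology)
  then have "continuous_map ?T ?T (\<lambda>g. inv\<^bsub>G\<^esub> g)"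
    unfolding continuous_map_in_subtopology using tsp subgroup.m_inv_closed[OF H] by auto
  then have "continuous_map ?T ?T (\<lambda>g. inv\<^bsub>G\<lparr>carrier := H\<rparr>\<^esub> g)"
    by (rule continuous_map_eq) (use tsp H in simp)
  with mult show ?thesis
    using tsp H by (simp add: topological_group_def G.subgroup_imp_group)
qed

lemma g_space_topological_group: "g_space G T X \<alpha> \<Longrightarrow> topological_group G T"
  by (simp add: g_space_def)

lemma g_space_action_one: "g_space G T X \<alpha> \<Longrightarrow> x \<in> topspace X \<Longrightarrow> \<alpha> \<one>\<^bsub>G\<^esub> x = x"
  by (simp add: g_space_def)

lemma g_space_action_mult:
  "g_space G T X \<alpha> \<Longrightarrow> g \<in> carrier G \<Longrightarrow> h \<in> carrier G \<Longrightarrow> x \<in> topspace X \<Longrightarrow>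
     \<alpha> g (\<alpha> h x) = \<alpha> (g \<otimes>\<^bsub>G\<^esub> h) x"
  by (simp add: g_space_def)

lemma g_space_continuous_map_action:
  assumes "g_space G T X \<alpha>" "g \<in> carrier G"
  shows "continuous_map X X (\<alpha> g)"
proof -
  have "continuous_map X (prod_topology T X) (\<lambda>x. (g, x))"
    using assms by (auto simp: g_space_def topological_group_def intro!: continuous_map_pairedI)
  moreover have "continuous_map (prod_topology T X) X (\<lambda>p. \<alpha> (fst p) (snd p))"
    using assms(1) by (simp add: g_space_def)
  ultimately have "continuous_map X X ((\<lambda>p. \<alpha> (fst p) (snd p)) \<circ> (\<lambda>x. (g, x)))"
    by (rule continuous_map_compose)
  then show ?thesis by (simp add: o_def)
qed

lemma g_space_action_in_topspace:
  assumes "g_space G T X \<alpha>" "g \<in> carrier G" "x \<in> topspace X"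
  shows "\<alpha> g x \<in> topspace X"
  using continuous_map_image_subset_topspace[OF g_space_continuous_map_action[OF assms(1,2)]] assms(3)
  by blast

lemma g_space_action_left_quotient:
  assumes gs: "g_space G T X \<alpha>" and g: "g \<in> carrier G" "g' \<in> carrier G" and x: "x \<in> topspace X"
  shows "\<alpha> g (\<alpha> (inv\<^bsub>G\<^esub> g \<otimes>\<^bsub>G\<^esub> g') x) = \<alpha> g' x"
proof -
  interpret G: group G using gs by (simp add: g_space_def topological_group_def)
  have "g \<otimes>\<^bsub>G\<^esub> (inv\<^bsub>G\<^esub> g \<otimes>\<^bsub>G\<^esub> g') = g'" using g by (simp add: G.m_assoc[symmetric])
  then show ?thesis using g_space_action_mult[OF gs] g x by simp
qed

lemma g_space_action_conjugate:
  assumes gs: "g_space G T X \<alpha>" and g: "g \<in> carrier G" "h \<in> carrier G" and x: "x \<in> topspace X"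
  shows "\<alpha> h (\<alpha> (inv\<^bsub>G\<^esub> h \<otimes>\<^bsub>G\<^esub> g \<otimes>\<^bsub>G\<^esub> h) (\<alpha> (inv\<^bsub>G\<^esub> h) x)) = \<alpha> g x"
proof -
  interpret G: group G using gs by (simp add: g_space_def topological_group_def)
  have "inv\<^bsub>G\<^esub> h \<otimes>\<^bsub>G\<^esub> g \<otimes>\<^bsub>G\<^esub> h \<otimes>\<^bsub>G\<^esub> inv\<^bsub>G\<^esub> h = inv\<^bsub>G\<^esub> h \<otimes>\<^bsub>G\<^esub> g"
    using g by (simp add: G.m_assoc)
  then have "\<alpha> (inv\<^bsub>G\<^esub> h \<otimes>\<^bsub>G\<^esub> g \<otimes>\<^bsub>G\<^esub> h) (\<alpha> (inv\<^bsub>G\<^esub> h) x) = \<alpha> (inv\<^bsub>G\<^esub> h \<otimes>\<^bsub>G\<^esub> g) x"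
    using g_space_action_mult[OF gs] g x by simp
  then show ?thesis using g_space_action_left_quotient[OF gs g(2,1) x] by simp
qed

lemma g_space_nhds_unit:
  assumes gs: "g_space G T X \<alpha>" and W: "openin X W" "x \<in> W"
  shows "\<exists>N V. openin T N \<and> \<one>\<^bsub>G\<^esub> \<in> N \<and> openin X V \<and> x \<in> V \<and> (\<forall>g\<in>N. \<forall>y\<in>V. \<alpha> g y \<in> W)"
proof -
  let ?A = "{z \<in> topspace (prod_topology T X). \<alpha> (fst z) (snd z) \<in> W}"
  have "continuous_map (prod_topology T X) X (\<lambda>z. \<alpha> (fst z) (snd z))"
    using gs by (simp add: g_space_def)
  then have "openin (prod_topology T X) ?A"
    using W(1) by (rule openin_continuous_map_preimage)
  moreover have tg: "topological_group G T" using gs by (rule g_space_topological_group)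
  then have "\<one>\<^bsub>G\<^esub> \<in> topspace T"
    using topological_group_topspace[OF tg] monoid.one_closed[OF group.is_monoid[OF topological_group_group[OF tg]]] by simp
  moreover have "x \<in> topspace X" using openin_subset[OF W(1)] W(2) by blast
  ultimately have A: "openin (prod_topology T X) ?A" and mem: "(\<one>\<^bsub>G\<^esub>, x) \<in> ?A"
    using W(2) g_space_action_one[OF gs] by simp_all
  from A[unfolded openin_prod_topology_alt, rule_format, OF mem]
  obtain N V where "openin T N" "openin X V" "\<one>\<^bsub>G\<^esub> \<in> N" "x \<in> V" "N \<times> V \<subseteq> ?A"
    by blast
  then show ?thesis by (intro exI[of _ N] exI[of _ V]) auto
qed

section \<open>Factoring an action through a homomorphism\<close>

(* The action is continuous at (1, x) when G carries the topology induced by phi from T'. *)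
definition continuous_at_unit_via ::
  "('g, 'c) monoid_scheme \<Rightarrow> ('h, 'd) monoid_scheme \<Rightarrow> 'h topology \<Rightarrow> ('g \<Rightarrow> 'h) \<Rightarrow>
   'x topology \<Rightarrow> ('g \<Rightarrow> 'x \<Rightarrow> 'x) \<Rightarrow> 'x \<Rightarrow> bool" where
  "continuous_at_unit_via G G' T' \<phi> X \<alpha> x \<longleftrightarrow>
     (\<forall>W. openin X W \<and> x \<in> W \<longrightarrow>
        (\<exists>Q V. openin T' Q \<and> \<one>\<^bsub>G'\<^esub> \<in> Q \<and> openin X V \<and> x \<in> V \<and>
               (\<forall>g\<in>carrier G. \<phi> g \<in> Q \<longrightarrow> (\<forall>y\<in>V. \<alpha> g y \<in> W))))"

lemma continuous_at_unit_viaD: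
  assumes "continuous_at_unit_via G G' T' \<phi> X \<alpha> x" "openin X W" "x \<in> W"
  shows "\<exists>Q V. openin T' Q \<and> \<one>\<^bsub>G'\<^esub> \<in> Q \<and> openin X V \<and> x \<in> V \<and>
           (\<forall>g\<in>carrier G. \<phi> g \<in> Q \<longrightarrow> (\<forall>y\<in>V. \<alpha> g y \<in> W))"
  using assms unfolding continuous_at_unit_via_def by blast

lemma kernel_acts_trivially:
  assumes gs: "g_space G T X \<alpha>" and C: "continuous_at_unit_via G G' T' \<phi> X \<alpha> x"
    and x: "x \<in> topspace X" and g: "g \<in> carrier G" "\<phi> g = \<one>\<^bsub>G'\<^esub>"
  shows "\<alpha> g x = x"
proof (rule ccontr)
  assume "\<alpha> g x \<noteq> x"
  then have ne: "x \<noteq> \<alpha> g x" by simp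
  have "t1_space X" using gs by (simp add: g_space_def tychonoff_space_def)
  then have "x \<noteq> \<alpha> g x \<longrightarrow> (\<exists>W. openin X W \<and> x \<in> W \<and> \<alpha> g x \<notin> W)"
    using x g_space_action_in_topspace[OF gs g(1) x] unfolding t1_space_def by simp
  then obtain W where W: "openin X W" "x \<in> W" "\<alpha> g x \<notin> W" using ne by blast
  obtain Q V where "\<one>\<^bsub>G'\<^esub> \<in> Q" "x \<in> V" "\<forall>g\<in>carrier G. \<phi> g \<in> Q \<longrightarrow> (\<forall>y\<in>V. \<alpha> g y \<in> W)"
    using continuous_at_unit_viaD[OF C W(1,2)] by blast
  then have "\<alpha> g x \<in> W" using g by metis
  then show False using W(3) by contradiction
qed

lemma action_eq_on_fibres:
  assumes gs: "g_space G T X \<alpha>" and hom: "\<phi> \<in> hom G G'" and G': "group G'"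
    and C: "continuous_at_unit_via G G' T' \<phi> X \<alpha> x" and x: "x \<in> topspace X"
    and g: "g \<in> carrier G" "g' \<in> carrier G" "\<phi> g = \<phi> g'"
  shows "\<alpha> g x = \<alpha> g' x"
proof -
  interpret G: group G using gs by (simp add: g_space_def topological_group_def)
  interpret group_hom G G' \<phi> using hom G' by (simp add: group_hom_def group_hom_axioms_def G.group_axioms)
  have "\<phi> (inv\<^bsub>G\<^esub> g \<otimes>\<^bsub>G\<^esub> g') = \<one>\<^bsub>G'\<^esub>" using g by simp
  then have "\<alpha> (inv\<^bsub>G\<^esub> g \<otimes>\<^bsub>G\<^esub> g') x = x"
    using kernel_acts_trivially[OF gs C x] g by simp
  then show ?thesis using g_space_action_left_quotient[OF gs g(1,2) x] by simp
qed

lemma continuous_at_unit_via_translate: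
  assumes gs: "g_space G T X \<alpha>" and tg: "topological_group G' T'" and hom: "\<phi> \<in> hom G G'"
    and C: "continuous_at_unit_via G G' T' \<phi> X \<alpha> x" and x: "x \<in> topspace X"
    and g: "g \<in> carrier G" and W: "openin X W" "\<alpha> g x \<in> W"
  shows "\<exists>U V. openin T' U \<and> \<phi> g \<in> U \<and> openin X V \<and> x \<in> V \<and>
           (\<forall>g'\<in>carrier G. \<phi> g' \<in> U \<longrightarrow> (\<forall>y\<in>V. \<alpha> g' y \<in> W))"
proof -
  interpret G: group G using gs by (simp add: g_space_def topological_group_def)
  interpret group_hom G G' \<phi>
    using hom tg by (simp add: group_hom_def group_hom_axioms_def G.group_axioms topological_group_def)
  have tsp: "topspace T' = carrier G'" using tg by (rule topological_group_topspace)
  define W' where "W' = {y \<in> topspace X. \<alpha> g y \<in> W}"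
  have W': "openin X W'"
    unfolding W'_def using openin_continuous_map_preimage[OF g_space_continuous_map_action[OF gs g] W(1)] .
  have xW': "x \<in> W'" unfolding W'_def using x W(2) by simp
  obtain Q V where Q: "openin T' Q" "\<one>\<^bsub>G'\<^esub> \<in> Q" and V: "openin X V" "x \<in> V"
    and QV: "\<forall>k\<in>carrier G. \<phi> k \<in> Q \<longrightarrow> (\<forall>y\<in>V. \<alpha> k y \<in> W')"
    using continuous_at_unit_viaD[OF C W' xW'] by blast
  define U where "U = {q \<in> topspace T'. inv\<^bsub>G'\<^esub> \<phi> g \<otimes>\<^bsub>G'\<^esub> q \<in> Q}"
  have "openin T' U"
    unfolding U_def using g
    by (intro openin_continuous_map_preimage[OF continuous_map_left_translation[OF tg] Q(1)]) simp
  moreover have "\<phi> g \<in> U" unfolding U_def using g Q(2) tsp by simp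
  moreover have "\<alpha> g' y \<in> W" if g': "g' \<in> carrier G" "\<phi> g' \<in> U" and y: "y \<in> V" for g' y
  proof -
    have "\<phi> (inv\<^bsub>G\<^esub> g \<otimes>\<^bsub>G\<^esub> g') \<in> Q" using g g' unfolding U_def by simp
    then have "\<alpha> g (\<alpha> (inv\<^bsub>G\<^esub> g \<otimes>\<^bsub>G\<^esub> g') y) \<in> W"
      using QV y g g'(1) unfolding W'_def by simp
    then show ?thesis
      using g_space_action_left_quotient[OF gs g g'(1)] openin_subset[OF V(1)] y by auto
  qed
  ultimately show ?thesis using V by (intro exI[of _ U] exI[of _ V]) blast
qed

lemma continuous_map_action_through_hom:
  assumes gs: "g_space G T X \<alpha>" and tg: "topological_group G' T'"
    and hom: "\<phi> \<in> hom G G'" and onto: "\<phi> ` carrier G = carrier G'"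
    and C: "\<And>x. x \<in> topspace X \<Longrightarrow> continuous_at_unit_via G G' T' \<phi> X \<alpha> x"
    and \<gamma>: "\<And>g x. g \<in> carrier G \<Longrightarrow> x \<in> topspace X \<Longrightarrow> \<gamma> (\<phi> g) x = \<alpha> g x"
  shows "continuous_map (prod_topology T' X) X (\<lambda>z. \<gamma> (fst z) (snd z))"
  unfolding continuous_map_def
proof (intro conjI allI impI)
  have tsp: "topspace T' = carrier G'" using tg by (rule topological_group_topspace)
  show "(\<lambda>z. \<gamma> (fst z) (snd z)) \<in> topspace (prod_topology T' X) \<rightarrow> topspace X"
  proof
    fix z assume "z \<in> topspace (prod_topology T' X)"
    then have "fst z \<in> \<phi> ` carrier G" and x: "snd z \<in> topspace X"
      using tsp onto by (auto simp: mem_Times_iff)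
    then obtain g where "g \<in> carrier G" "fst z = \<phi> g" by blast
    then show "\<gamma> (fst z) (snd z) \<in> topspace X"
      using \<gamma> g_space_action_in_topspace[OF gs] x by simp
  qed
  fix W assume W: "openin X W"
  show "openin (prod_topology T' X) {z \<in> topspace (prod_topology T' X). \<gamma> (fst z) (snd z) \<in> W}"
    unfolding openin_prod_topology_alt
  proof (intro allI impI)
    fix p x assume "(p, x) \<in> {z \<in> topspace (prod_topology T' X). \<gamma> (fst z) (snd z) \<in> W}"
    then have p: "p \<in> carrier G'" and x: "x \<in> topspace X" and pxW: "\<gamma> p x \<in> W" using tsp by auto
    obtain g where g: "g \<in> carrier G" and pg: "p = \<phi> g" using p onto by blast
    have "\<alpha> g x \<in> W" using pxW pg \<gamma>[OF g x] by simp
    then obtain U V where U: "openin T' U" "p \<in> U" and V: "openin X V" "x \<in> V"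
      and UV: "\<forall>g'\<in>carrier G. \<phi> g' \<in> U \<longrightarrow> (\<forall>y\<in>V. \<alpha> g' y \<in> W)"
      using continuous_at_unit_via_translate[OF gs tg hom C[OF x] x g W] pg by blast
    have "U \<times> V \<subseteq> {z \<in> topspace (prod_topology T' X). \<gamma> (fst z) (snd z) \<in> W}"
    proof clarify
      fix q y assume q: "q \<in> U" and y: "y \<in> V"
      have yX: "y \<in> topspace X" using openin_subset[OF V(1)] y by blast
      have "q \<in> \<phi> ` carrier G" using openin_subset[OF U(1)] q tsp onto by blast
      then obtain g' where g': "g' \<in> carrier G" and qg: "q = \<phi> g'" by blast
      show "(q, y) \<in> topspace (prod_topology T' X) \<and> \<gamma> (fst (q, y)) (snd (q, y)) \<in> W"
        using UV g' q qg y yX \<gamma>[OF g' yX] openin_subset[OF U(1)] by auto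
    qed
    then show "\<exists>U V. openin T' U \<and> openin X V \<and> p \<in> U \<and> x \<in> V \<and>
        U \<times> V \<subseteq> {z \<in> topspace (prod_topology T' X). \<gamma> (fst z) (snd z) \<in> W}"
      using U V by blast
  qed
qed

lemma g_space_through_hom:
  assumes gs: "g_space G T X \<alpha>" and tg: "topological_group G' T'"
    and hom: "\<phi> \<in> hom G G'" and onto: "\<phi> ` carrier G = carrier G'" and cont: "continuous_map T T' \<phi>"
    and C: "\<And>x. x \<in> topspace X \<Longrightarrow> continuous_at_unit_via G G' T' \<phi> X \<alpha> x"
  obtains \<gamma> where "g_space G' T' X \<gamma>" "equivariant_pair G T G' T' X \<alpha> \<gamma> \<phi>"
proof
  interpret G: group G using gs by (simp add: g_space_def topological_group_def)
  interpret group_hom G G' \<phi>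
    using hom tg by (simp add: group_hom_def group_hom_axioms_def G.group_axioms topological_group_def)
  define \<gamma> where "\<gamma> p x = \<alpha> (SOME g. g \<in> carrier G \<and> \<phi> g = p) x" for p x
  have \<gamma>: "\<gamma> (\<phi> g) x = \<alpha> g x" if g: "g \<in> carrier G" and x: "x \<in> topspace X" for g x
  proof -
    have "(SOME g'. g' \<in> carrier G \<and> \<phi> g' = \<phi> g) \<in> carrier G \<and>
        \<phi> (SOME g'. g' \<in> carrier G \<and> \<phi> g' = \<phi> g) = \<phi> g"
      by (rule someI[of _ g]) (use g in simp)
    then show ?thesis
      unfolding \<gamma>_def using action_eq_on_fibres[OF gs hom H.group_axioms C[OF x] x] g by metis
  qed
  show "equivariant_pair G T G' T' X \<alpha> \<gamma> \<phi>"
    using hom cont \<gamma> by (simp add: equivariant_pair_def)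
  show "g_space G' T' X \<gamma>"
    unfolding g_space_def
  proof (intro conjI ballI)
    show "tychonoff_space X" using gs by (simp add: g_space_def)
    show "continuous_map (prod_topology T' X) X (\<lambda>p. \<gamma> (fst p) (snd p))"
      using continuous_map_action_through_hom[OF gs tg hom onto C \<gamma>] .
    show "\<gamma> \<one>\<^bsub>G'\<^esub> x = x" if "x \<in> topspace X" for x
      using \<gamma>[OF G.one_closed that] g_space_action_one[OF gs that] by simp
    show "\<gamma> p (\<gamma> q x) = \<gamma> (p \<otimes>\<^bsub>G'\<^esub> q) x"
      if p: "p \<in> carrier G'" and q: "q \<in> carrier G'" and x: "x \<in> topspace X" for p q x
    proof -
      obtain g h where g: "g \<in> carrier G" "p = \<phi> g" and h: "h \<in> carrier G" "q = \<phi> h"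
        using p q onto by blast
      have "\<gamma> (p \<otimes>\<^bsub>G'\<^esub> q) x = \<alpha> (g \<otimes>\<^bsub>G\<^esub> h) x"
        using \<gamma>[of "g \<otimes>\<^bsub>G\<^esub> h" x] g h x by simp
      moreover have "\<gamma> p (\<gamma> q x) = \<alpha> (g \<otimes>\<^bsub>G\<^esub> h) x"
        using g h x \<gamma> g_space_action_mult[OF gs] g_space_action_in_topspace[OF gs] by simp
      ultimately show ?thesis by simp
    qed
  qed (rule tg)
qed

lemma transitive_action_through_hom:
  assumes "transitive_action G X \<alpha>" "equivariant_pair G T G' T' X \<alpha> \<gamma> \<phi>" "\<phi> ` carrier G = carrier G'"
  shows "transitive_action G' X \<gamma>"
  unfolding transitive_action_def
proof
  fix x assume x: "x \<in> topspace X"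
  have "(\<lambda>p. \<gamma> p x) ` carrier G' = (\<lambda>g. \<gamma> (\<phi> g) x) ` carrier G"
    unfolding assms(3)[symmetric] image_image ..
  also have "\<dots> = (\<lambda>g. \<alpha> g x) ` carrier G"
    using assms(2) x unfolding equivariant_pair_def by (intro image_cong) simp_all
  finally show "(\<lambda>p. \<gamma> p x) ` carrier G' = topspace X"
    using assms(1) x unfolding transitive_action_def by simp
qed

lemma continuous_at_unit_via_transitive:
  assumes gs: "g_space G T X \<alpha>" and tg: "topological_group G' T'" and hom: "\<phi> \<in> hom G G'"
    and tr: "transitive_action G X \<alpha>" and x0: "x0 \<in> topspace X"
    and C0: "continuous_at_unit_via G G' T' \<phi> X \<alpha> x0" and x: "x \<in> topspace X"
  shows "continuous_at_unit_via G G' T' \<phi> X \<alpha> x"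
  unfolding continuous_at_unit_via_def
proof (intro allI impI)
  interpret G: group G using gs by (simp add: g_space_def topological_group_def)
  interpret group_hom G G' \<phi>
    using hom tg by (simp add: group_hom_def group_hom_axioms_def G.group_axioms topological_group_def)
  have tsp: "topspace T' = carrier G'" using tg by (rule topological_group_topspace)
  fix W assume W: "openin X W \<and> x \<in> W"
  have "x \<in> (\<lambda>g. \<alpha> g x0) ` carrier G" using tr x x0 unfolding transitive_action_def by blast
  then obtain h where h: "h \<in> carrier G" and xh: "x = \<alpha> h x0" by blast
  have ih: "inv\<^bsub>G\<^esub> h \<in> carrier G" using h by simp
  define W0 where "W0 = {y \<in> topspace X. \<alpha> h y \<in> W}"
  have W0: "openin X W0"
    unfolding W0_def using openin_continuous_map_preimage[OF g_space_continuous_map_action[OF gs h]] W by simp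
  have x0W0: "x0 \<in> W0" unfolding W0_def using x0 xh W by simp
  obtain Q V0 where Q: "openin T' Q" "\<one>\<^bsub>G'\<^esub> \<in> Q" and V0: "openin X V0" "x0 \<in> V0"
    and OV0: "\<forall>k\<in>carrier G. \<phi> k \<in> Q \<longrightarrow> (\<forall>y\<in>V0. \<alpha> k y \<in> W0)"
    using continuous_at_unit_viaD[OF C0 W0 x0W0] by blast
  define Q' where "Q' = {q \<in> topspace T'. inv\<^bsub>G'\<^esub> \<phi> h \<otimes>\<^bsub>G'\<^esub> q \<otimes>\<^bsub>G'\<^esub> \<phi> h \<in> Q}"
  define V where "V = {y \<in> topspace X. \<alpha> (inv\<^bsub>G\<^esub> h) y \<in> V0}"
  have "openin T' Q'"
    unfolding Q'_def using continuous_map_conjugation[OF tg hom_closed[OF h]] Q(1)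
    by (rule openin_continuous_map_preimage)
  moreover have "\<one>\<^bsub>G'\<^esub> \<in> Q'" unfolding Q'_def using Q(2) tsp h by simp
  moreover have "openin X V"
    unfolding V_def using openin_continuous_map_preimage[OF g_space_continuous_map_action[OF gs ih] V0(1)] .
  moreover have "\<alpha> (inv\<^bsub>G\<^esub> h) x = x0"
    using xh g_space_action_mult[OF gs ih h x0] g_space_action_one[OF gs x0] h by simp
  then have "x \<in> V" unfolding V_def using x V0(2) by simp
  moreover have "\<alpha> g y \<in> W" if g: "g \<in> carrier G" "\<phi> g \<in> Q'" and y: "y \<in> V" for g y
  proof -
    have "\<phi> (inv\<^bsub>G\<^esub> h \<otimes>\<^bsub>G\<^esub> g \<otimes>\<^bsub>G\<^esub> h) \<in> Q" using g h unfolding Q'_def by simp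
    then have "\<alpha> (inv\<^bsub>G\<^esub> h \<otimes>\<^bsub>G\<^esub> g \<otimes>\<^bsub>G\<^esub> h) (\<alpha> (inv\<^bsub>G\<^esub> h) y) \<in> W0"
      using OV0 y g h unfolding V_def by simp
    then show ?thesis
      using g_space_action_conjugate[OF gs g(1) h] y unfolding W0_def V_def by simp
  qed
  ultimately show "\<exists>Q V. openin T' Q \<and> \<one>\<^bsub>G'\<^esub> \<in> Q \<and> openin X V \<and> x \<in> V \<and>
      (\<forall>g\<in>carrier G. \<phi> g \<in> Q \<longrightarrow> (\<forall>y\<in>V. \<alpha> g y \<in> W))"
    by (intro exI[of _ Q'] exI[of _ V]) blast
qed

section \<open>Equiuniformities\<close>

lemma uniformity_on_open_cover: "uniformity_on X \<U> \<Longrightarrow> u \<in> \<U> \<Longrightarrow> open_cover X u"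
  by (simp add: uniformity_on_def)

lemma uniformity_on_star_nhds:
  "uniformity_on X \<U> \<Longrightarrow> openin X W \<Longrightarrow> x \<in> W \<Longrightarrow> \<exists>u\<in>\<U>. star_of {x} u \<subseteq> W"
  by (simp add: uniformity_on_def)

lemma equiuniformity_bounded:
  assumes "equiuniformity G T X \<alpha> \<U>" "u \<in> \<U>"
  shows "\<exists>N v. openin T N \<and> \<one>\<^bsub>G\<^esub> \<in> N \<and> v \<in> \<U> \<and>
           refines ((\<lambda>V. {\<alpha> g y | g y. g \<in> N \<and> y \<in> V}) ` v) u"
  using assms unfolding equiuniformity_def by blast

lemma refines_trans: "refines a b \<Longrightarrow> refines b c \<Longrightarrow> refines a c"
  unfolding refines_def by (meson order_trans)

lemma refines_image_mono:
  assumes "\<And>V. V \<in> v \<Longrightarrow> f V \<subseteq> g V" "refines (g ` v) u"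
  shows "refines (f ` v) u"
  unfolding refines_def
proof
  fix W assume "W \<in> f ` v"
  then obtain V where V: "V \<in> v" "W = f V" by blast
  then obtain U where "U \<in> u" "g V \<subseteq> U" using assms(2) unfolding refines_def by blast
  then show "\<exists>U\<in>u. W \<subseteq> U" using assms(1)[OF V(1)] V(2) by blast
qed

(* The boundedness condition of an equiuniformity, for the topology induced by phi from T'. *)
definition uniformly_bounded_via ::
  "('g, 'c) monoid_scheme \<Rightarrow> ('h, 'd) monoid_scheme \<Rightarrow> 'h topology \<Rightarrow> ('g \<Rightarrow> 'h) \<Rightarrow>
   ('g \<Rightarrow> 'x \<Rightarrow> 'x) \<Rightarrow> 'x set set set \<Rightarrow> bool" where
  "uniformly_bounded_via G G' T' \<phi> \<alpha> \<U> \<longleftrightarrow>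
     (\<forall>u\<in>\<U>. \<exists>Q v. openin T' Q \<and> \<one>\<^bsub>G'\<^esub> \<in> Q \<and> v \<in> \<U> \<and>
        refines ((\<lambda>V. {\<alpha> g y | g y. g \<in> carrier G \<and> \<phi> g \<in> Q \<and> y \<in> V}) ` v) u)"

lemma uniformly_bounded_viaD:
  assumes "uniformly_bounded_via G G' T' \<phi> \<alpha> \<U>" "u \<in> \<U>"
  shows "\<exists>Q v. openin T' Q \<and> \<one>\<^bsub>G'\<^esub> \<in> Q \<and> v \<in> \<U> \<and>
           refines ((\<lambda>V. {\<alpha> g y | g y. g \<in> carrier G \<and> \<phi> g \<in> Q \<and> y \<in> V}) ` v) u"
  using assms unfolding uniformly_bounded_via_def by blast

lemma uniformly_bounded_via_base:
  assumes base: "\<And>u. u \<in> \<U> \<Longrightarrow> \<exists>u'\<in>B. refines u' u" and v: "\<And>u. u \<in> B \<Longrightarrow> v u \<in> \<U>"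
    and Nv: "\<And>u. u \<in> B \<Longrightarrow> refines ((\<lambda>V. {\<alpha> g y | g y. g \<in> N u \<and> y \<in> V}) ` v u) u"
    and Q: "\<And>u. u \<in> B \<Longrightarrow> \<exists>Q. openin T' Q \<and> \<one>\<^bsub>G'\<^esub> \<in> Q \<and> (\<forall>g\<in>carrier G. \<phi> g \<in> Q \<longrightarrow> g \<in> N u)"
  shows "uniformly_bounded_via G G' T' \<phi> \<alpha> \<U>"
  unfolding uniformly_bounded_via_def
proof
  fix u assume "u \<in> \<U>"
  then obtain u' where u': "u' \<in> B" "refines u' u" using base by blast
  obtain Q where Q: "openin T' Q" "\<one>\<^bsub>G'\<^esub> \<in> Q" "\<forall>g\<in>carrier G. \<phi> g \<in> Q \<longrightarrow> g \<in> N u'"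
    using Q[OF u'(1)] by blast
  have incl: "{\<alpha> g y | g y. g \<in> carrier G \<and> \<phi> g \<in> Q \<and> y \<in> V} \<subseteq> {\<alpha> g y | g y. g \<in> N u' \<and> y \<in> V}"
    for V
  proof
    fix z assume "z \<in> {\<alpha> g y | g y. g \<in> carrier G \<and> \<phi> g \<in> Q \<and> y \<in> V}"
    then obtain g y where z: "z = \<alpha> g y" "g \<in> carrier G" "\<phi> g \<in> Q" "y \<in> V" by auto
    then have "g \<in> N u'" using Q(3) by simp
    then show "z \<in> {\<alpha> g y | g y. g \<in> N u' \<and> y \<in> V}" using z(1,4) by auto
  qed
  have "refines ((\<lambda>V. {\<alpha> g y | g y. g \<in> carrier G \<and> \<phi> g \<in> Q \<and> y \<in> V}) ` v u') u"
    using refines_image_mono[OF incl refines_trans[OF Nv[OF u'(1)] u'(2)]] .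
  then show "\<exists>Q v. openin T' Q \<and> \<one>\<^bsub>G'\<^esub> \<in> Q \<and> v \<in> \<U> \<and>
      refines ((\<lambda>V. {\<alpha> g y | g y. g \<in> carrier G \<and> \<phi> g \<in> Q \<and> y \<in> V}) ` v) u"
    using Q(1,2) v[OF u'(1)] by (intro exI[of _ Q] exI[of _ "v u'"]) blast
qed

lemma continuous_at_unit_via_uniformly_bounded:
  assumes gs: "g_space G T X \<alpha>" and hom: "\<phi> \<in> hom G G'" and G': "group G'"
    and U: "uniformity_on X \<U>" and bd: "uniformly_bounded_via G G' T' \<phi> \<alpha> \<U>"
    and x: "x \<in> topspace X"
  shows "continuous_at_unit_via G G' T' \<phi> X \<alpha> x"
  unfolding continuous_at_unit_via_def
proof (intro allI impI)
  interpret G: group G using gs by (simp add: g_space_def topological_group_def)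
  interpret group_hom G G' \<phi> using hom G' by (simp add: group_hom_def group_hom_axioms_def G.group_axioms)
  fix W assume "openin X W \<and> x \<in> W"
  then obtain u where u: "u \<in> \<U>" "star_of {x} u \<subseteq> W"
    using uniformity_on_star_nhds[OF U] by blast
  then obtain Q v where Q: "openin T' Q" "\<one>\<^bsub>G'\<^esub> \<in> Q" and v: "v \<in> \<U>"
    and vu: "refines ((\<lambda>V. {\<alpha> g y | g y. g \<in> carrier G \<and> \<phi> g \<in> Q \<and> y \<in> V}) ` v) u"
    using uniformly_bounded_viaD[OF bd u(1)] by blast
  obtain V where V: "V \<in> v" "x \<in> V" "openin X V"
    using uniformity_on_open_cover[OF U v] x unfolding open_cover_def by blast
  then obtain U' where U': "U' \<in> u" "{\<alpha> g y | g y. g \<in> carrier G \<and> \<phi> g \<in> Q \<and> y \<in> V} \<subseteq> U'"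
    using vu unfolding refines_def by blast
  moreover have "x = \<alpha> \<one>\<^bsub>G\<^esub> x" "\<phi> \<one>\<^bsub>G\<^esub> \<in> Q"
    using g_space_action_one[OF gs x] Q(2) by simp_all
  then have "x \<in> {\<alpha> g y | g y. g \<in> carrier G \<and> \<phi> g \<in> Q \<and> y \<in> V}"
    using G.one_closed V(2) by blast
  ultimately have "U' \<subseteq> W" using u(2) unfolding star_of_def by blast
  then show "\<exists>Q V. openin T' Q \<and> \<one>\<^bsub>G'\<^esub> \<in> Q \<and> openin X V \<and> x \<in> V \<and>
      (\<forall>g\<in>carrier G. \<phi> g \<in> Q \<longrightarrow> (\<forall>y\<in>V. \<alpha> g y \<in> W))"
    using Q V U' by (intro exI[of _ Q] exI[of _ V]) blast
qed

lemma equiuniformity_through_hom: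
  assumes eu: "equiuniformity G T X \<alpha> \<U>" and gs': "g_space G' T' X \<gamma>"
    and eq: "equivariant_pair G T G' T' X \<alpha> \<gamma> \<phi>" and onto: "\<phi> ` carrier G = carrier G'"
    and bd: "uniformly_bounded_via G G' T' \<phi> \<alpha> \<U>"
  shows "equiuniformity G' T' X \<gamma> \<U>"
proof -
  have U: "uniformity_on X \<U>" using eu by (simp add: equiuniformity_def)
  have \<gamma>: "\<gamma> (\<phi> g) x = \<alpha> g x" if "g \<in> carrier G" "x \<in> topspace X" for g x
    using eq that by (simp add: equivariant_pair_def)
  have sub: "V \<subseteq> topspace X" if "u \<in> \<U>" "V \<in> u" for u V
    using uniformity_on_open_cover[OF U that(1)] that(2) openin_subset unfolding open_cover_def by blast
  have "(\<lambda>U. \<gamma> p ` U) ` u \<in> \<U>" if u: "u \<in> \<U>" and p: "p \<in> carrier G'" for u p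
  proof -
    obtain g where g: "g \<in> carrier G" "p = \<phi> g" using p onto by blast
    have "\<gamma> p ` U = \<alpha> g ` U" if "U \<in> u" for U
      using sub[OF u that] \<gamma> g by (intro image_cong) auto
    then have "(\<lambda>U. \<gamma> p ` U) ` u = (\<lambda>U. \<alpha> g ` U) ` u" by (rule image_cong[OF refl])
    then show ?thesis using eu u g by (simp add: equiuniformity_def)
  qed
  moreover have "\<exists>Q v. openin T' Q \<and> \<one>\<^bsub>G'\<^esub> \<in> Q \<and> v \<in> \<U> \<and>
      refines ((\<lambda>V. {\<gamma> p y | p y. p \<in> Q \<and> y \<in> V}) ` v) u" if u: "u \<in> \<U>" for u
  proof -
    obtain Q v where Q: "openin T' Q" "\<one>\<^bsub>G'\<^esub> \<in> Q" and v: "v \<in> \<U>"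
      and vu: "refines ((\<lambda>V. {\<alpha> g y | g y. g \<in> carrier G \<and> \<phi> g \<in> Q \<and> y \<in> V}) ` v) u"
      using uniformly_bounded_viaD[OF bd u] by blast
    have QG: "Q \<subseteq> \<phi> ` carrier G"
      using openin_subset[OF Q(1)] onto topological_group_topspace[OF g_space_topological_group[OF gs']]
      by simp
    have "{\<gamma> p y | p y. p \<in> Q \<and> y \<in> V} \<subseteq> {\<alpha> g y | g y. g \<in> carrier G \<and> \<phi> g \<in> Q \<and> y \<in> V}"
      if "V \<in> v" for V
    proof
      fix z assume "z \<in> {\<gamma> p y | p y. p \<in> Q \<and> y \<in> V}"
      then obtain p y where z: "z = \<gamma> p y" "p \<in> Q" "y \<in> V" by blast
      moreover obtain g where "g \<in> carrier G" "p = \<phi> g" using z(2) QG by blast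
      moreover have "y \<in> topspace X" using sub[OF v that] z(3) by blast
      ultimately have "z = \<alpha> g y" "g \<in> carrier G" "\<phi> g \<in> Q" "y \<in> V" using \<gamma> by auto
      then show "z \<in> {\<alpha> g y | g y. g \<in> carrier G \<and> \<phi> g \<in> Q \<and> y \<in> V}" by blast
    qed
    then have "refines ((\<lambda>V. {\<gamma> p y | p y. p \<in> Q \<and> y \<in> V}) ` v) u"
      using vu by (rule refines_image_mono)
    then show ?thesis using Q v by blast
  qed
  ultimately show ?thesis using U by (simp add: equiuniformity_def)
qed

section \<open>Subgroups of products\<close>

locale subgroup_of_product =
  fixes S :: "'s set" and Gs :: "'s \<Rightarrow> ('g, 'c) monoid_scheme" and Ts :: "'s \<Rightarrow> 'g topology"
    and H :: "('s \<Rightarrow> 'g) set"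
  assumes topological_group_factor: "\<And>s. s \<in> S \<Longrightarrow> topological_group (Gs s) (Ts s)"
    and subgroup_H: "subgroup H (product_group S Gs)"
begin

(* GH with TH is the acting group G; restricted_group J with restricted_topology J is pr_J(G)
  with the subspace topology of the product over J. *)
abbreviation GH where "GH \<equiv> (product_group S Gs)\<lparr>carrier := H\<rparr>"
abbreviation TH where "TH \<equiv> subtopology (product_topology Ts S) H"
abbreviation restricted_group where
  "restricted_group J \<equiv> (product_group J Gs)\<lparr>carrier := (\<lambda>f. restrict f J) ` H\<rparr>"
abbreviation restricted_topology where
  "restricted_topology J \<equiv> subtopology (product_topology Ts J) ((\<lambda>f. restrict f J) ` H)"

lemma topological_group_product_factors:
  "J \<subseteq> S \<Longrightarrow> topological_group (product_group J Gs) (product_topology Ts J)"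
  using topological_group_factor by (intro topological_group_product) blast

lemma H_subset_topspace: "H \<subseteq> topspace (product_topology Ts S)"
  using subgroup.subset[OF subgroup_H]
    topological_group_topspace[OF topological_group_product_factors[OF order_refl]]
  by simp

lemma restrict_hom_product:
  "J \<subseteq> S \<Longrightarrow> (\<lambda>f. restrict f J) \<in> hom (product_group S Gs) (product_group J Gs)"
  by (intro homI) (auto simp: PiE_iff fun_eq_iff)

lemma topological_group_restricted:
  assumes "J \<subseteq> S"
  shows "topological_group (restricted_group J) (restricted_topology J)"
proof (rule topological_group_subgroup)
  show "topological_group (product_group J Gs) (product_topology Ts J)"
    using assms by (rule topological_group_product_factors)
  have "group_hom (product_group S Gs) (product_group J Gs) (\<lambda>f. restrict f J)"
    using topological_group_group[OF topological_group_product_factors[OF order_refl]]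
      topological_group_group[OF topological_group_product_factors[OF assms]]
      restrict_hom_product[OF assms]
    by (simp add: group_hom_def group_hom_axioms_def)
  then show "subgroup ((\<lambda>f. restrict f J) ` H) (product_group J Gs)"
    using subgroup_H by (rule group_hom.subgroup_img_is_subgroup)
qed

lemma restrict_hom_restricted:
  assumes "J \<subseteq> S"
  shows "(\<lambda>f. restrict f J) \<in> hom GH (restricted_group J)"
  by (rule hom_restrict_carrier[OF restrict_hom_product[OF assms] subgroup.subset[OF subgroup_H]])

lemma restrict_onto_restricted: "(\<lambda>f. restrict f J) ` carrier GH = carrier (restricted_group J)"
  by simp

lemma continuous_map_restrict:
  assumes "J \<subseteq> S"
  shows "continuous_map TH (restricted_topology J) (\<lambda>f. restrict f J)"
  unfolding continuous_map_in_subtopology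
proof
  show "continuous_map TH (product_topology Ts J) (\<lambda>f. restrict f J)"
    unfolding continuous_map_componentwise
  proof (intro conjI ballI)
    fix k assume k: "k \<in> J"
    then have "continuous_map TH (Ts k) (\<lambda>f. f k)"
      using assms by (intro continuous_map_from_subtopology continuous_map_product_projection) auto
    then show "continuous_map TH (Ts k) (\<lambda>f. restrict f J k)" using k by simp
  qed auto
  show "(\<lambda>f. restrict f J) \<in> topspace TH \<rightarrow> (\<lambda>f. restrict f J) ` H" by auto
qed

lemma small_coordinate_set:
  assumes K: "infinite K" and B: "B \<lesssim> K"
    and N: "\<And>b. b \<in> B \<Longrightarrow> openin TH (N b)" "\<And>b. b \<in> B \<Longrightarrow> \<one>\<^bsub>GH\<^esub> \<in> N b"
  obtains J where "J \<subseteq> S" "J \<lesssim> K"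
    "\<And>b. b \<in> B \<Longrightarrow> \<exists>Q. openin (restricted_topology J) Q \<and> \<one>\<^bsub>restricted_group J\<^esub> \<in> Q \<and>
        (\<forall>g\<in>H. restrict g J \<in> Q \<longrightarrow> g \<in> N b)"
proof (rule small_coordinate_set_for_neighbourhoods[OF K B N H_subset_topspace])
  fix J assume J: "J \<subseteq> S" "J \<lesssim> K"
    and Q: "\<And>b. b \<in> B \<Longrightarrow> \<exists>Q. openin (restricted_topology J) Q \<and> restrict \<one>\<^bsub>GH\<^esub> J \<in> Q \<and>
        (\<forall>g\<in>H. restrict g J \<in> Q \<longrightarrow> g \<in> N b)"
  have one: "restrict \<one>\<^bsub>GH\<^esub> J = \<one>\<^bsub>restricted_group J\<^esub>"
    using J(1) by (auto simp: fun_eq_iff)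
  show thesis
  proof (rule that[OF J])
    fix b assume "b \<in> B"
    from Q[OF this] show "\<exists>Q. openin (restricted_topology J) Q \<and> \<one>\<^bsub>restricted_group J\<^esub> \<in> Q \<and>
        (\<forall>g\<in>H. restrict g J \<in> Q \<longrightarrow> g \<in> N b)"
      unfolding one .
  qed
qed

lemma reduced_g_space:
  assumes J: "J \<subseteq> S" and gs: "g_space GH TH X \<alpha>"
    and C: "\<And>x. x \<in> topspace X \<Longrightarrow>
      continuous_at_unit_via GH (restricted_group J) (restricted_topology J) (\<lambda>f. restrict f J) X \<alpha> x"
  obtains \<gamma> where "g_space (restricted_group J) (restricted_topology J) X \<gamma>"
    "equivariant_pair GH TH (restricted_group J) (restricted_topology J) X \<alpha> \<gamma> (\<lambda>f. restrict f J)"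
  by (rule g_space_through_hom[OF gs topological_group_restricted[OF J] restrict_hom_restricted[OF J]
        restrict_onto_restricted continuous_map_restrict[OF J] C])

lemma exists_coordinates_continuous_at_unit:
  assumes K: "infinite K" and gs: "g_space GH TH X \<alpha>"
    and tr: "transitive_action GH X \<alpha>" and ch: "character_le X K"
  obtains J where "J \<subseteq> S" "J \<lesssim> K" "\<And>x. x \<in> topspace X \<Longrightarrow>
      continuous_at_unit_via GH (restricted_group J) (restricted_topology J) (\<lambda>f. restrict f J) X \<alpha> x"
proof (cases "topspace X = {}")
  case True
  show ?thesis by (rule that[of "{}"]) (simp_all add: True empty_lepoll)
next
  case False
  then obtain x0 where x0: "x0 \<in> topspace X" by blast
  then obtain B where B: "B \<lesssim> K" "\<And>b. b \<in> B \<Longrightarrow> openin X b \<and> x0 \<in> b"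
    "\<And>W. openin X W \<Longrightarrow> x0 \<in> W \<Longrightarrow> \<exists>b\<in>B. b \<subseteq> W"
    using ch unfolding character_le_def by metis
  have "\<exists>N V. openin TH N \<and> \<one>\<^bsub>GH\<^esub> \<in> N \<and> openin X V \<and> x0 \<in> V \<and> (\<forall>g\<in>N. \<forall>y\<in>V. \<alpha> g y \<in> b)"
    if "b \<in> B" for b
    using B(2)[OF that] by (intro g_space_nhds_unit[OF gs]) simp_all
  then obtain N V where NV: "\<And>b. b \<in> B \<Longrightarrow> openin TH (N b) \<and> \<one>\<^bsub>GH\<^esub> \<in> N b \<and>
      openin X (V b) \<and> x0 \<in> V b \<and> (\<forall>g\<in>N b. \<forall>y\<in>V b. \<alpha> g y \<in> b)"
    by metis
  obtain J where J: "J \<subseteq> S" "J \<lesssim> K" and Q: "\<And>b. b \<in> B \<Longrightarrow>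
      \<exists>Q. openin (restricted_topology J) Q \<and> \<one>\<^bsub>restricted_group J\<^esub> \<in> Q \<and>
        (\<forall>g\<in>H. restrict g J \<in> Q \<longrightarrow> g \<in> N b)"
    using small_coordinate_set[OF K B(1), of N] NV by blast
  have "continuous_at_unit_via GH (restricted_group J) (restricted_topology J) (\<lambda>f. restrict f J) X \<alpha> x0"
    unfolding continuous_at_unit_via_def
  proof (intro allI impI)
    fix W assume "openin X W \<and> x0 \<in> W"
    then obtain b where b: "b \<in> B" "b \<subseteq> W" using B(3) by blast
    then obtain Q where "openin (restricted_topology J) Q" "\<one>\<^bsub>restricted_group J\<^esub> \<in> Q"
      "\<forall>g\<in>H. restrict g J \<in> Q \<longrightarrow> g \<in> N b"
      using Q by blast
    then show "\<exists>Q V'. openin (restricted_topology J) Q \<and> \<one>\<^bsub>restricted_group J\<^esub> \<in> Q \<and>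
        openin X V' \<and> x0 \<in> V' \<and> (\<forall>g\<in>carrier GH. restrict g J \<in> Q \<longrightarrow> (\<forall>y\<in>V'. \<alpha> g y \<in> W))"
      using NV[OF b(1)] b(2) by (intro exI[of _ Q] exI[of _ "V b"]) auto
  qed
  from continuous_at_unit_via_transitive[OF gs topological_group_restricted[OF J(1)]
      restrict_hom_restricted[OF J(1)] tr x0 this]
  show ?thesis by (rule that[OF J])
qed

lemma exists_coordinates_uniformly_bounded:
  assumes K: "infinite K" and eu: "equiuniformity GH TH X \<alpha> \<U>" and w: "uniformity_weight_le \<U> K"
  obtains J where "J \<subseteq> S" "J \<lesssim> K"
    "uniformly_bounded_via GH (restricted_group J) (restricted_topology J) (\<lambda>f. restrict f J) \<alpha> \<U>"
proof -
  let ?act = "\<lambda>N V. {\<alpha> g y | g y. g \<in> N \<and> y \<in> V}"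
  obtain B where B: "B \<subseteq> \<U>" "B \<lesssim> K" "\<And>u. u \<in> \<U> \<Longrightarrow> \<exists>u'\<in>B. refines u' u"
    using w unfolding uniformity_weight_le_def by blast
  have "\<forall>u\<in>B. \<exists>N v. openin TH N \<and> \<one>\<^bsub>GH\<^esub> \<in> N \<and> v \<in> \<U> \<and> refines ((\<lambda>V. ?act N V) ` v) u"
    by (intro ballI equiuniformity_bounded[OF eu] subsetD[OF B(1)])
  from bchoice[OF this] obtain N
    where "\<forall>u\<in>B. \<exists>v. openin TH (N u) \<and> \<one>\<^bsub>GH\<^esub> \<in> N u \<and> v \<in> \<U> \<and> refines ((\<lambda>V. ?act (N u) V) ` v) u"
    by blast
  from bchoice[OF this] obtain v
    where "\<forall>u\<in>B. openin TH (N u) \<and> \<one>\<^bsub>GH\<^esub> \<in> N u \<and> v u \<in> \<U> \<and> refines ((\<lambda>V. ?act (N u) V) ` v u) u"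
    by blast
  note Nv = this[rule_format]
  obtain J where J: "J \<subseteq> S" "J \<lesssim> K" and Q: "\<And>u. u \<in> B \<Longrightarrow>
      \<exists>Q. openin (restricted_topology J) Q \<and> \<one>\<^bsub>restricted_group J\<^esub> \<in> Q \<and>
        (\<forall>g\<in>H. restrict g J \<in> Q \<longrightarrow> g \<in> N u)"
    using small_coordinate_set[OF K B(2), of N] Nv by blast
  have "uniformly_bounded_via GH (restricted_group J) (restricted_topology J) (\<lambda>f. restrict f J) \<alpha> \<U>"
  proof (rule uniformly_bounded_via_base[where B = B and N = N and v = v])
    show "\<And>u. u \<in> \<U> \<Longrightarrow> \<exists>u'\<in>B. refines u' u" by (rule B(3))
    show "\<And>u. u \<in> B \<Longrightarrow> v u \<in> \<U>" using Nv by blast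
    show "\<And>u. u \<in> B \<Longrightarrow> refines ((\<lambda>V. ?act (N u) V) ` v u) u" using Nv by blast
    show "\<And>u. u \<in> B \<Longrightarrow> \<exists>Q. openin (restricted_topology J) Q \<and> \<one>\<^bsub>restricted_group J\<^esub> \<in> Q \<and>
        (\<forall>g\<in>carrier GH. restrict g J \<in> Q \<longrightarrow> g \<in> N u)"
      using Q by simp
  qed
  with J show ?thesis by (rule that)
qed

lemma reduction_transitive:
  assumes K: "infinite K" and gs: "g_space GH TH X \<alpha>"
    and tr: "transitive_action GH X \<alpha>" and ch: "character_le X K"
  shows "\<exists>J\<subseteq>S. J \<lesssim> K \<and> (\<exists>\<gamma>. g_space (restricted_group J) (restricted_topology J) X \<gamma> \<and>
     transitive_action (restricted_group J) X \<gamma> \<and>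
     equivariant_pair GH TH (restricted_group J) (restricted_topology J) X \<alpha> \<gamma> (\<lambda>f. restrict f J))"
proof (rule exists_coordinates_continuous_at_unit[OF K gs tr ch])
  fix J assume J: "J \<subseteq> S" "J \<lesssim> K" and C: "\<And>x. x \<in> topspace X \<Longrightarrow>
      continuous_at_unit_via GH (restricted_group J) (restricted_topology J) (\<lambda>f. restrict f J) X \<alpha> x"
  obtain \<gamma> where \<gamma>: "g_space (restricted_group J) (restricted_topology J) X \<gamma>"
      "equivariant_pair GH TH (restricted_group J) (restricted_topology J) X \<alpha> \<gamma> (\<lambda>f. restrict f J)"
    by (rule reduced_g_space[OF J(1) gs C])
  then show ?thesis
    using J transitive_action_through_hom[OF tr \<gamma>(2) restrict_onto_restricted] by blast
qed

lemma reduction_equiuniform: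
  assumes K: "infinite K" and gs: "g_space GH TH X \<alpha>"
    and eu: "equiuniformity GH TH X \<alpha> \<U>" and w: "uniformity_weight_le \<U> K"
  shows "\<exists>J\<subseteq>S. J \<lesssim> K \<and> (\<exists>\<gamma>. g_space (restricted_group J) (restricted_topology J) X \<gamma> \<and>
     equiuniformity (restricted_group J) (restricted_topology J) X \<gamma> \<U> \<and>
     equivariant_pair GH TH (restricted_group J) (restricted_topology J) X \<alpha> \<gamma> (\<lambda>f. restrict f J))"
proof (rule exists_coordinates_uniformly_bounded[OF K eu w])
  fix J assume J: "J \<subseteq> S" "J \<lesssim> K"
    and bd: "uniformly_bounded_via GH (restricted_group J) (restricted_topology J) (\<lambda>f. restrict f J) \<alpha> \<U>"
  have U: "uniformity_on X \<U>" using eu by (simp add: equiuniformity_def)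
  obtain \<gamma> where \<gamma>: "g_space (restricted_group J) (restricted_topology J) X \<gamma>"
      "equivariant_pair GH TH (restricted_group J) (restricted_topology J) X \<alpha> \<gamma> (\<lambda>f. restrict f J)"
    by (rule reduced_g_space[OF J(1) gs continuous_at_unit_via_uniformly_bounded[OF gs
          restrict_hom_restricted[OF J(1)] topological_group_group[OF topological_group_restricted[OF J(1)]] U bd]])
  then show ?thesis
    using J equiuniformity_through_hom[OF eu \<gamma> restrict_onto_restricted bd] by blast
qed

end

theorem proposition3p2:
  fixes Tau :: "'k set"
    and S :: "'s set"
    and Gs :: "'s \<Rightarrow> ('g, 'c) monoid_scheme"
    and Ts :: "'s \<Rightarrow> 'g topology"
    and H :: "('s \<Rightarrow> 'g) set"
    and X :: "'x topology"
    and \<alpha> :: "('s \<Rightarrow> 'g) \<Rightarrow> 'x \<Rightarrow> 'x"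
    and \<U> :: "'x set set set"
  assumes "infinite Tau"
    and "\<forall>s\<in>S. topological_group (Gs s) (Ts s)"
    and "subgroup H (product_group S Gs)"
    and "g_space ((product_group S Gs)\<lparr>carrier := H\<rparr>) (subtopology (product_topology Ts S) H) X \<alpha>"
  shows
    "(transitive_action ((product_group S Gs)\<lparr>carrier := H\<rparr>) X \<alpha> \<and> character_le X Tau \<longrightarrow>
       (\<exists>S'\<subseteq>S. S' \<lesssim> Tau \<and>
          (\<exists>\<gamma>. g_space ((product_group S' Gs)\<lparr>carrier := (\<lambda>f. restrict f S') ` H\<rparr>)
                        (subtopology (product_topology Ts S') ((\<lambda>f. restrict f S') ` H)) X \<gamma> \<and>
               transitive_action ((product_group S' Gs)\<lparr>carrier := (\<lambda>f. restrict f S') ` H\<rparr>) X \<gamma> \<and>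
               equivariant_pair
                 ((product_group S Gs)\<lparr>carrier := H\<rparr>) (subtopology (product_topology Ts S) H)
                 ((product_group S' Gs)\<lparr>carrier := (\<lambda>f. restrict f S') ` H\<rparr>)
                 (subtopology (product_topology Ts S') ((\<lambda>f. restrict f S') ` H))
                 X \<alpha> \<gamma> (\<lambda>f. restrict f S')))) \<and>
     (G_tychonoff TYPE('b) ((product_group S Gs)\<lparr>carrier := H\<rparr>) (subtopology (product_topology Ts S) H) X \<alpha> \<and>
      equiuniformity ((product_group S Gs)\<lparr>carrier := H\<rparr>) (subtopology (product_topology Ts S) H) X \<alpha> \<U> \<and>
      uniformity_weight_le \<U> Tau \<longrightarrow>
       (\<exists>S'\<subseteq>S. S' \<lesssim> Tau \<and>
          (\<exists>\<gamma>. g_space ((product_group S' Gs)\<lparr>carrier := (\<lambda>f. restrict f S') ` H\<rparr>)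
                        (subtopology (product_topology Ts S') ((\<lambda>f. restrict f S') ` H)) X \<gamma> \<and>
               equiuniformity ((product_group S' Gs)\<lparr>carrier := (\<lambda>f. restrict f S') ` H\<rparr>)
                        (subtopology (product_topology Ts S') ((\<lambda>f. restrict f S') ` H)) X \<gamma> \<U> \<and>
               equivariant_pair
                 ((product_group S Gs)\<lparr>carrier := H\<rparr>) (subtopology (product_topology Ts S) H)
                 ((product_group S' Gs)\<lparr>carrier := (\<lambda>f. restrict f S') ` H\<rparr>)
                 (subtopology (product_topology Ts S') ((\<lambda>f. restrict f S') ` H))
                 X \<alpha> \<gamma> (\<lambda>f. restrict f S'))))"
proof -
  interpret subgroup_of_product S Gs Ts H
    using assms(2,3) by (simp add: subgroup_of_product_def)
  show ?thesis
    using reduction_transitive[OF assms(1,4)] reduction_equiuniform[OF assms(1,4)] by blast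
qed

end
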